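(* For each $n\geq1$, the chromatic polynomial of $\Sigma_n$ is $\chi(\Sigma_n,\lambda)=(-1)^{3^n-1}\lambda P_n(\lambda)$, where $P_n=P_{2,n}+3P_{1,n}+P_{0,n}$ and $P_{i,n}(\lambda)=H_{i,n}(1-\lambda,0)$ for $i=0,1,2$.
   Context: Graphs are finite. For a graph $G$, a spanning subgraph $A$ has vertex set $V(G)$ and edge set $E(A)\subseteq E(G)$; $k(A)$ is its number of components, $r(A)=|V(G)|-k(A)$, $n(A)=|E(A)|-r(A)$; the weight of $A$ is $(x-1)^{r(G)-r(A)}(y-1)^{n(A)}$. The graphs $\Sigma_n$ ($n\ge1$; Schreier graphs of the Hanoi Towers group $H^{(3)}$ with loops removed) each have three outmost vertices top, left, right: $\Sigma_1$ is the triangle $K_3$; $\Sigma_{n+1}$ is the disjoint union of three copies $G_1,G_2,G_3$ of $\Sigma_n$ together with three new edges joining left$(G_1)$ to top$(G_2)$, right$(G_1)$ to top$(G_3)$, and right$(G_2)$ to left$(G_3)$; its outmost vertices are top$(G_1)$, left$(G_2)$, right$(G_3)$. $H_{2,n}$ (resp. $H_{1,n}$, $H_{0,n}$) is the sum of the weights (with $G=\Sigma_n$) of the spanning subgraphs of $\Sigma_n$ in which the three outmost vertices lie in one component (resp. left and right outmost in one component, top in another; resp. the three in three distinct components). $\chi(G,\lambda)$ is the number of proper colorings of the vertices of $G$ with $\lambda$ colors. *)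

theory Defs
  imports "HOL-Library.FuncSet"
begin

section \<open>General notions for a finite graph given by a vertex set V and a set E of
  2-element edges; spanning subgraphs are identified with their edge sets A \<subseteq> E.\<close>

definition adj :: "'v set set \<Rightarrow> ('v \<times> 'v) set" where
  "adj A = {(u, v). {u, v} \<in> A}"

definition conn :: "'v set set \<Rightarrow> ('v \<times> 'v) set" where
  "conn A = (adj A)\<^sup>*"

definition ncomp :: "'v set \<Rightarrow> 'v set set \<Rightarrow> nat" where
  "ncomp V A = card (V // conn A)"

definition rk :: "'v set \<Rightarrow> 'v set set \<Rightarrow> nat" where
  "rk V A = card V - ncomp V A"

definition nullity :: "'v set \<Rightarrow> 'v set set \<Rightarrow> nat" where
  "nullity V A = card A - rk V A"

definition weight :: "'v set \<Rightarrow> 'v set set \<Rightarrow> 'v set set \<Rightarrow> 'a::comm_ring_1 \<Rightarrow> 'a \<Rightarrow> 'a" where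
  "weight V E A x y = (x - 1) ^ (rk V E - rk V A) * (y - 1) ^ (nullity V A)"

definition chromatic :: "'v set \<Rightarrow> 'v set set \<Rightarrow> nat \<Rightarrow> nat" where
  "chromatic V E lam = card {c \<in> V \<rightarrow>\<^sub>E {..<lam}. \<forall>u v. {u, v} \<in> E \<longrightarrow> c u \<noteq> c v}"

section \<open>The graphs Sigma_n (vertices are words over {0,1,2})\<close>

fun sigV :: "nat \<Rightarrow> nat list set" where
  "sigV 0 = {}"
| "sigV (Suc 0) = {[0], [1], [2]}"
| "sigV (Suc (Suc n)) = (\<Union>i\<in>{0,1,2::nat}. (\<lambda>w. i # w) ` sigV (Suc n))"

fun sig_top :: "nat \<Rightarrow> nat list" where
  "sig_top 0 = []"
| "sig_top (Suc 0) = [0]"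
| "sig_top (Suc (Suc n)) = 0 # sig_top (Suc n)"

fun sig_left :: "nat \<Rightarrow> nat list" where
  "sig_left 0 = []"
| "sig_left (Suc 0) = [1]"
| "sig_left (Suc (Suc n)) = 1 # sig_left (Suc n)"

fun sig_right :: "nat \<Rightarrow> nat list" where
  "sig_right 0 = []"
| "sig_right (Suc 0) = [2]"
| "sig_right (Suc (Suc n)) = 2 # sig_right (Suc n)"

text \<open>Copy G_1, G_2, G_3 is obtained by prefixing 0, 1, 2 respectively.\<close>
fun sigE :: "nat \<Rightarrow> nat list set set" where
  "sigE 0 = {}"
| "sigE (Suc 0) = {{[0], [1]}, {[1], [2]}, {[0], [2]}}"
| "sigE (Suc (Suc n)) =
     (\<Union>i\<in>{0,1,2::nat}. (\<lambda>e. (\<lambda>w. i # w) ` e) ` sigE (Suc n))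
     \<union> {{0 # sig_left (Suc n), 1 # sig_top (Suc n)},
        {0 # sig_right (Suc n), 2 # sig_top (Suc n)},
        {1 # sig_right (Suc n), 2 # sig_left (Suc n)}}"

definition H2 :: "nat \<Rightarrow> 'a::comm_ring_1 \<Rightarrow> 'a \<Rightarrow> 'a" where
  "H2 n x y = (\<Sum>A \<in> {A. A \<subseteq> sigE n \<and>
        (sig_top n, sig_left n) \<in> conn A \<and> (sig_top n, sig_right n) \<in> conn A}.
      weight (sigV n) (sigE n) A x y)"

definition H1 :: "nat \<Rightarrow> 'a::comm_ring_1 \<Rightarrow> 'a \<Rightarrow> 'a" where
  "H1 n x y = (\<Sum>A \<in> {A. A \<subseteq> sigE n \<and>
        (sig_left n, sig_right n) \<in> conn A \<and> (sig_top n, sig_left n) \<notin> conn A}.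
      weight (sigV n) (sigE n) A x y)"

definition H0 :: "nat \<Rightarrow> 'a::comm_ring_1 \<Rightarrow> 'a \<Rightarrow> 'a" where
  "H0 n x y = (\<Sum>A \<in> {A. A \<subseteq> sigE n \<and>
        (sig_top n, sig_left n) \<notin> conn A \<and> (sig_top n, sig_right n) \<notin> conn A \<and>
        (sig_left n, sig_right n) \<notin> conn A}.
      weight (sigV n) (sigE n) A x y)"

definition P2 :: "nat \<Rightarrow> int \<Rightarrow> int" where "P2 n lam = H2 n (1 - lam) 0"
definition P1 :: "nat \<Rightarrow> int \<Rightarrow> int" where "P1 n lam = H1 n (1 - lam) 0"
definition P0 :: "nat \<Rightarrow> int \<Rightarrow> int" where "P0 n lam = H0 n (1 - lam) 0"

definition Pn :: "nat \<Rightarrow> int \<Rightarrow> int" where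
  "Pn n lam = P2 n lam + 3 * P1 n lam + P0 n lam"

end

theory Submission
  imports Defs "HOL-Combinatorics.Transposition"
begin

text \<open>
  The proof has two independent halves.  The first is general graph theory.
  By inclusion-exclusion over monochromatic edges, chi(G, lam) equals
  the sum over spanning subgraphs A of (-1)^|A| lam^k(A) (Whitney's expansion).
  Using 1 \<le> k(A) \<le> |V| \<le> k(A) + |A|, each term of a connected graph equals
  (-1)^(|V|-1) lam times the Tutte weight of A at x = 1 - lam, y = 0, so chi(G, lam)
  is (-1)^(|V|-1) lam times the specialised Tutte sum.

  The second half is specific to Sigma_n, which is connected and has 3^n vertices.
  Classifying spanning subgraphs by how the three outmost vertices are connected splits
  the Tutte sum into five parts: H_2, H_0, and three parts in which exactly one pair of
  outmost vertices is connected.  Permutations of the letters 0, 1, 2 are automorphisms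
  of Sigma_n that permute the outmost vertices and preserve weights, so all three of
  these parts equal H_1.  Hence the Tutte sum is H_2 + 3 H_1 + H_0, which at
  x = 1 - lam, y = 0 is P_n(lam).
\<close>

lemma conn_refl [simp]: "(u, u) \<in> conn A"
  unfolding conn_def by simp

lemma conn_edge: "{u, v} \<in> A \<Longrightarrow> (u, v) \<in> conn A"
  unfolding conn_def adj_def by (rule r_into_rtrancl) simp

lemma conn_sym: "(u, v) \<in> conn A \<Longrightarrow> (v, u) \<in> conn A"
proof -
  have "sym (adj A)" by (rule symI) (simp add: adj_def insert_commute)
  then have "sym (conn A)" unfolding conn_def by (rule sym_rtrancl)
  then show "(u, v) \<in> conn A \<Longrightarrow> (v, u) \<in> conn A" by (rule symD)
qed

lemma conn_trans: "(u, v) \<in> conn A \<Longrightarrow> (v, w) \<in> conn A \<Longrightarrow> (u, w) \<in> conn A"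
  unfolding conn_def by (rule rtrancl_trans)

lemma conn_mono: "A \<subseteq> B \<Longrightarrow> (u, v) \<in> conn A \<Longrightarrow> (u, v) \<in> conn B"
  unfolding conn_def adj_def by (rule rtrancl_mono[THEN subsetD]) auto

lemma conn_class_eq:
  assumes "(x, y) \<in> conn A"
  shows "conn A `` {x} = conn A `` {y}"
proof
  show "conn A `` {x} \<subseteq> conn A `` {y}"
    using conn_trans[OF conn_sym[OF assms]] by blast
  show "conn A `` {y} \<subseteq> conn A `` {x}"
    using conn_trans[OF assms] by blast
qed

lemma conn_commute: "(u, v) \<in> conn A \<longleftrightarrow> (v, u) \<in> conn A"
  using conn_sym[of u v A] conn_sym[of v u A] by blast

lemma conn_same_class:
  assumes "(u, v) \<in> conn A"
  shows "(u, w) \<in> conn A \<longleftrightarrow> (v, w) \<in> conn A"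
  using conn_trans[OF conn_sym[OF assms], of w] conn_trans[OF assms, of w] by blast

lemma adj_insert: "adj (insert {u, v} A) = insert (u, v) (insert (v, u) (adj A))"
  unfolding adj_def by (auto simp: doubleton_eq_iff)

lemma conn_insert_cases:
  assumes "(x, y) \<in> conn (insert {u, v} A)"
  shows "(x, y) \<in> conn A \<or>
    (((x, u) \<in> conn A \<or> (x, v) \<in> conn A) \<and> ((u, y) \<in> conn A \<or> (v, y) \<in> conn A))"
  using assms unfolding conn_def adj_insert rtrancl_insert by auto

lemma quotient_conn: "V // conn A = (\<lambda>x. conn A `` {x}) ` V"
  unfolding quotient_def by auto

lemma ncomp_bounds:
  assumes "finite V" "V \<noteq> {}"
  shows "1 \<le> ncomp V A" "ncomp V A \<le> card V"
  using assms by (simp_all add: ncomp_def quotient_conn Suc_le_eq card_gt_0_iff card_image_le)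

lemma ncomp_empty: "ncomp V {} = card V"
proof -
  have "V // conn {} = (\<lambda>x. {x}) ` V"
    unfolding quotient_def conn_def adj_def by auto
  then show ?thesis unfolding ncomp_def by (simp add: card_image)
qed

lemma ncomp_eq_1:
  assumes "r \<in> V" "\<And>x. x \<in> V \<Longrightarrow> (r, x) \<in> conn A"
  shows "ncomp V A = 1"
proof -
  have "(\<lambda>x. conn A `` {x}) ` V = (\<lambda>x. conn A `` {r}) ` V"
    using conn_class_eq[OF assms(2)] by (intro image_cong) simp_all
  then have "V // conn A = {conn A `` {r}}"
    using assms(1) unfolding quotient_conn by auto
  then show ?thesis unfolding ncomp_def by simp
qed

lemma conn_insert_class_unchanged:
  assumes "(u, x) \<notin> conn (insert {u, v} A)"
  shows "conn (insert {u, v} A) `` {x} = conn A `` {x}"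
proof -
  let ?R' = "conn (insert {u, v} A)"
  have uv: "(u, v) \<in> ?R'" by (rule conn_edge) simp
  have xu: "(x, u) \<notin> ?R'" using assms conn_sym by metis
  have xv: "(x, v) \<notin> ?R'" using xu conn_trans[OF _ conn_sym[OF uv]] by blast
  have sub: "(a, b) \<in> ?R'" if "(a, b) \<in> conn A" for a b
    using conn_mono[OF _ that] by blast
  have "(x, y) \<in> conn A" if "(x, y) \<in> ?R'" for y
    using conn_insert_cases[OF that] xu xv sub by blast
  then show ?thesis using sub by blast
qed

lemma conn_insert_class_joined:
  assumes "(u, x) \<in> conn (insert {u, v} A)"
  shows "conn A `` {x} \<in> {conn A `` {u}, conn A `` {v}}"
proof -
  have "(u, x) \<in> conn A \<or> (v, x) \<in> conn A" using conn_insert_cases[OF assms] by auto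
  then show ?thesis using conn_class_eq[of u x A] conn_class_eq[of v x A] by auto
qed

lemma components_insert_edge:
  "V // conn A \<subseteq> {conn A `` {u}, conn A `` {v}}
     \<union> (V // conn (insert {u, v} A) - {conn (insert {u, v} A) `` {u}})"
proof
  let ?R = "conn A" and ?R' = "conn (insert {u, v} A)"
  fix X assume "X \<in> V // ?R"
  then obtain x where x: "x \<in> V" "X = ?R `` {x}" unfolding quotient_conn by auto
  show "X \<in> {?R `` {u}, ?R `` {v}} \<union> (V // ?R' - {?R' `` {u}})"
  proof (cases "(u, x) \<in> ?R'")
    case True
    then have "X \<in> {?R `` {u}, ?R `` {v}}" using conn_insert_class_joined[OF True] x(2) by simp
    then show ?thesis by (rule UnI1)
  next
    case False
    have X: "X = ?R' `` {x}" using conn_insert_class_unchanged[OF False] x(2) by simp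
    have "x \<in> X" "x \<notin> ?R' `` {u}" using X False by simp_all
    then have "X \<noteq> ?R' `` {u}" by blast
    moreover have "X \<in> V // ?R'" using X x(1) by (simp add: quotient_conn)
    ultimately show ?thesis by simp
  qed
qed

lemma ncomp_insert_edge:
  assumes "finite V" "u \<in> V"
  shows "ncomp V A \<le> ncomp V (insert {u, v} A) + 1"
proof -
  let ?R = "conn A" and ?R' = "conn (insert {u, v} A)"
  let ?Old = "{?R `` {u}, ?R `` {v}}" and ?Kept = "V // ?R' - {?R' `` {u}}"
  have fin: "finite (V // ?R')" using assms(1) unfolding quotient_conn by simp
  have uin: "?R' `` {u} \<in> V // ?R'" using assms(2) unfolding quotient_conn by simp
  have "card (V // ?R) \<le> card (?Old \<union> ?Kept)"
    using components_insert_edge fin by (intro card_mono) simp_all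
  also have "\<dots> \<le> card ?Old + card ?Kept"
    by (rule card_Un_le)
  also have "\<dots> \<le> 2 + (card (V // ?R') - 1)"
  proof (rule add_mono)
    show "card ?Old \<le> 2" by (cases "?R `` {u} = ?R `` {v}") simp_all
    show "card ?Kept \<le> card (V // ?R') - 1"
      using card_Diff_singleton[OF uin] by (rule eq_imp_le)
  qed
  also have "\<dots> = card (V // ?R') + 1"
  proof -
    have "V // ?R' \<noteq> {}" using uin by (metis empty_iff)
    then have "card (V // ?R') > 0" using fin by (simp add: card_gt_0_iff)
    then show ?thesis by simp
  qed
  finally show ?thesis unfolding ncomp_def .
qed

definition graph_on :: "'v set \<Rightarrow> 'v set set \<Rightarrow> bool" where
  "graph_on V E \<longleftrightarrow> finite V \<and> (\<forall>e\<in>E. \<exists>u v. e = {u, v} \<and> u \<in> V \<and> v \<in> V)"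

lemma graph_on_subset: "graph_on V E \<Longrightarrow> A \<subseteq> E \<Longrightarrow> graph_on V A"
  unfolding graph_on_def by (meson subsetD)

lemma graph_on_finite_edges:
  assumes "graph_on V E"
  shows "finite E"
proof -
  have "E \<subseteq> Pow V"
  proof
    fix e assume "e \<in> E"
    then obtain u v where "e = {u, v}" "u \<in> V" "v \<in> V"
      using assms unfolding graph_on_def by meson
    then show "e \<in> Pow V" by simp
  qed
  then show ?thesis using assms unfolding graph_on_def by (simp add: finite_subset)
qed

text \<open>Rank bound r(A) \<le> |A|, i.e. |V| \<le> k(A) + |A|; it guarantees that the nullity
  n(A) = |A| - r(A) is not truncated by natural-number subtraction.\<close>
lemma card_le_ncomp_plus_card:
  assumes "graph_on V A"
  shows "card V \<le> ncomp V A + card A"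
proof -
  have "finite A" using assms by (rule graph_on_finite_edges)
  then show ?thesis using assms
  proof (induction A rule: finite_induct)
    case empty
    then show ?case by (simp add: ncomp_empty)
  next
    case (insert e A)
    then obtain u v where e: "e = {u, v}" "u \<in> V"
      unfolding graph_on_def by blast
    have "graph_on V A" using insert.prems graph_on_subset by blast
    then have "card V \<le> ncomp V A + card A" by (rule insert.IH)
    also have "\<dots> \<le> ncomp V (insert e A) + 1 + card A"
      using ncomp_insert_edge[OF _ e(2)] insert.prems e(1) unfolding graph_on_def by simp
    finally show ?case using insert.hyps by simp
  qed
qed

lemma graph_on_Un: "graph_on V E \<Longrightarrow> graph_on V F \<Longrightarrow> graph_on V (E \<union> F)"
  unfolding graph_on_def by blast

lemma graph_on_UN: "finite V \<Longrightarrow> (\<And>i. i \<in> I \<Longrightarrow> graph_on V (E i)) \<Longrightarrow> graph_on V (\<Union>i\<in>I. E i)"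
  unfolding graph_on_def by blast

section \<open>Whitney's expansion of the chromatic polynomial\<close>

definition class_lift :: "'a set \<Rightarrow> ('a \<times> 'a) set \<Rightarrow> ('a set \<Rightarrow> 'b) \<Rightarrow> 'a \<Rightarrow> 'b" where
  "class_lift V R g = (\<lambda>x\<in>V. g (R `` {x}))"

definition class_descend :: "'a set \<Rightarrow> ('a \<times> 'a) set \<Rightarrow> ('a \<Rightarrow> 'b) \<Rightarrow> 'a set \<Rightarrow> 'b" where
  "class_descend V R c = (\<lambda>X\<in>V // R. c (SOME x. x \<in> X \<inter> V))"

context
  fixes V :: "'a set" and R :: "('a \<times> 'a) set"
  assumes R_refl: "\<And>x. (x, x) \<in> R"
    and R_sym: "\<And>x y. (x, y) \<in> R \<Longrightarrow> (y, x) \<in> R"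
    and R_trans: "\<And>x y z. (x, y) \<in> R \<Longrightarrow> (y, z) \<in> R \<Longrightarrow> (x, z) \<in> R"
begin

lemma class_eq_of_rel:
  assumes xy: "(x, y) \<in> R"
  shows "R `` {x} = R `` {y}"
proof
  show "R `` {x} \<subseteq> R `` {y}" using R_trans[OF R_sym[OF xy]] by blast
  show "R `` {y} \<subseteq> R `` {x}" using R_trans[OF xy] by blast
qed

lemma class_representative:
  assumes "x \<in> V"
  shows "(SOME y. y \<in> R `` {x} \<inter> V) \<in> V \<and> (x, SOME y. y \<in> R `` {x} \<inter> V) \<in> R"
proof -
  have "x \<in> R `` {x} \<inter> V" using assms R_refl by simp
  then have "(SOME y. y \<in> R `` {x} \<inter> V) \<in> R `` {x} \<inter> V" by (rule someI)
  then show ?thesis by simp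
qed

lemma class_descend_lift:
  assumes g: "g \<in> V // R \<rightarrow>\<^sub>E S"
  shows "class_descend V R (class_lift V R g) = g"
proof
  fix X show "class_descend V R (class_lift V R g) X = g X"
  proof (cases "X \<in> V // R")
    case True
    then obtain x where x: "x \<in> V" "X = R `` {x}" by (rule quotientE)
    let ?p = "SOME y. y \<in> R `` {x} \<inter> V"
    have p: "?p \<in> V" "(x, ?p) \<in> R" using class_representative[OF x(1)] by simp_all
    have "class_descend V R (class_lift V R g) (R `` {x}) = g (R `` {?p})"
      using quotientI[OF x(1)] p(1) unfolding class_descend_def class_lift_def by simp
    also have "\<dots> = g (R `` {x})"
      using arg_cong[OF class_eq_of_rel[OF p(2)], of g] by (rule sym)
    finally show ?thesis using x(2) by simp
  next
    case False
    then show ?thesis using PiE_arb[OF g False] unfolding class_descend_def by simp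
  qed
qed

lemma class_lift_descend:
  assumes c: "c \<in> V \<rightarrow>\<^sub>E S" and const: "\<forall>x\<in>V. \<forall>y\<in>V. (x, y) \<in> R \<longrightarrow> c x = c y"
  shows "class_lift V R (class_descend V R c) = c"
proof
  fix x show "class_lift V R (class_descend V R c) x = c x"
  proof (cases "x \<in> V")
    case True
    let ?p = "SOME y. y \<in> R `` {x} \<inter> V"
    have "R `` {x} \<in> V // R" using True by (rule quotientI)
    then have "class_lift V R (class_descend V R c) x = c ?p"
      using True unfolding class_lift_def class_descend_def by simp
    also have "\<dots> = c x" using const class_representative[OF True] True by metis
    finally show ?thesis .
  next
    case False
    then show ?thesis using c unfolding class_lift_def by auto
  qed
qed

lemma class_lift_constant:
  assumes g: "g \<in> V // R \<rightarrow>\<^sub>E S"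
  shows "class_lift V R g \<in> {c \<in> V \<rightarrow>\<^sub>E S. \<forall>x\<in>V. \<forall>y\<in>V. (x, y) \<in> R \<longrightarrow> c x = c y}"
proof -
  have "class_lift V R g \<in> V \<rightarrow>\<^sub>E S" using g quotientI[of _ V R] unfolding class_lift_def by auto
  moreover have "class_lift V R g x = class_lift V R g y" if "x \<in> V" "y \<in> V" "(x, y) \<in> R" for x y
    using that class_eq_of_rel[OF that(3)] unfolding class_lift_def by simp
  ultimately show ?thesis by blast
qed

lemma class_descend_PiE:
  assumes c: "c \<in> V \<rightarrow>\<^sub>E S"
  shows "class_descend V R c \<in> V // R \<rightarrow>\<^sub>E S"
proof
  fix X assume X: "X \<in> V // R"
  then obtain x where x: "x \<in> V" "X = R `` {x}" by (rule quotientE)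
  then show "class_descend V R c X \<in> S"
    using c class_representative[OF x(1)] X unfolding class_descend_def by auto
qed (simp add: class_descend_def)

text \<open>Hence functions on V that are constant on the classes of R correspond bijectively
  to functions on the quotient V // R.\<close>
lemma card_class_constant_functions:
  assumes "finite V"
  shows "card {c \<in> V \<rightarrow>\<^sub>E S. \<forall>x\<in>V. \<forall>y\<in>V. (x, y) \<in> R \<longrightarrow> c x = c y}
    = card S ^ card (V // R)"
proof -
  let ?T = "{c \<in> V \<rightarrow>\<^sub>E S. \<forall>x\<in>V. \<forall>y\<in>V. (x, y) \<in> R \<longrightarrow> c x = c y}"
  have "bij_betw (class_lift V R) (V // R \<rightarrow>\<^sub>E S) ?T"
  proof (rule bij_betw_byWitness[where f' = "class_descend V R"])
    show "\<forall>g\<in>V // R \<rightarrow>\<^sub>E S. class_descend V R (class_lift V R g) = g"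
      using class_descend_lift by blast
    show "\<forall>c\<in>?T. class_lift V R (class_descend V R c) = c"
      using class_lift_descend by blast
    show "class_lift V R ` (V // R \<rightarrow>\<^sub>E S) \<subseteq> ?T"
      using class_lift_constant by (rule image_subsetI)
    show "class_descend V R ` ?T \<subseteq> V // R \<rightarrow>\<^sub>E S"
      using class_descend_PiE by blast
  qed
  then have "card ?T = card (V // R \<rightarrow>\<^sub>E S)"
    by (simp add: bij_betw_same_card)
  also have "\<dots> = card S ^ card (V // R)"
    using assms by (simp add: card_PiE quotient_def)
  finally show ?thesis .
qed

end

lemma const_along_conn:
  assumes "\<forall>u v. {u, v} \<in> A \<longrightarrow> c u = c v" "(x, y) \<in> conn A"
  shows "c x = c y"
  using assms(2) unfolding conn_def
proof (induction rule: rtrancl_induct)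
  case (step y z)
  then have "{y, z} \<in> A" by (simp add: adj_def)
  with assms(1) step.IH show ?case by simp
qed simp

lemma count_colourings_constant_on_edges:
  assumes "graph_on V A"
  shows "card {c \<in> V \<rightarrow>\<^sub>E {..<lam}. \<forall>u v. {u, v} \<in> A \<longrightarrow> c u = c v} = lam ^ ncomp V A"
proof -
  have ends: "u \<in> V \<and> v \<in> V" if uv: "{u, v} \<in> A" for u v
  proof -
    obtain a b where "{u, v} = {a, b}" "a \<in> V" "b \<in> V"
      using assms uv unfolding graph_on_def by meson
    then show ?thesis by (auto simp: doubleton_eq_iff)
  qed
  have "(\<forall>u v. {u, v} \<in> A \<longrightarrow> c u = c v) \<longleftrightarrow> (\<forall>x\<in>V. \<forall>y\<in>V. (x, y) \<in> conn A \<longrightarrow> c x = c y)"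
    for c :: "'a \<Rightarrow> nat"
    using const_along_conn ends conn_edge by metis
  then have "{c \<in> V \<rightarrow>\<^sub>E {..<lam}. \<forall>u v. {u, v} \<in> A \<longrightarrow> c u = c v}
    = {c \<in> V \<rightarrow>\<^sub>E {..<lam}. \<forall>x\<in>V. \<forall>y\<in>V. (x, y) \<in> conn A \<longrightarrow> c x = c y}"
    by simp
  also have "card \<dots> = card {..<lam} ^ card (V // conn A)"
    using assms unfolding graph_on_def
    by (intro card_class_constant_functions) (auto intro: conn_sym conn_trans)
  finally show ?thesis by (simp add: ncomp_def)
qed

lemma alternating_sum_Pow:
  assumes "finite S"
  shows "(\<Sum>T\<in>Pow S. (-1::int) ^ card T) = (if S = {} then 1 else 0)"
proof (cases "S = {}")
  case False
  have "card {T. T \<subseteq> S \<and> {} \<subseteq> T \<and> even (card T)} = card {T. T \<subseteq> S \<and> {} \<subseteq> T \<and> odd (card T)}"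
    using assms False by (intro card_subsupersets_even_odd) auto
  then have "(\<Sum>T\<in>Pow S. (-1::int) ^ card T) = 0"
    using assms by (intro sum_alternating_cancels) simp_all
  with False show ?thesis by simp
qed simp

definition monochromatic :: "'v set set \<Rightarrow> ('v \<Rightarrow> nat) \<Rightarrow> 'v set set" where
  "monochromatic E c = {e \<in> E. \<forall>a b. e = {a, b} \<longrightarrow> c a = c b}"

lemma proper_iff_no_monochromatic:
  assumes "graph_on V E"
  shows "(\<forall>u v. {u, v} \<in> E \<longrightarrow> c u \<noteq> c v) \<longleftrightarrow> monochromatic E c = {}"
proof
  assume proper: "\<forall>u v. {u, v} \<in> E \<longrightarrow> c u \<noteq> c v"
  show "monochromatic E c = {}"
  proof (rule equals0I)
    fix e assume e: "e \<in> monochromatic E c"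
    then have "e \<in> E" by (simp add: monochromatic_def)
    then obtain u v where uv: "e = {u, v}" using assms unfolding graph_on_def by meson
    then have "{u, v} \<in> E" "c u = c v" using e by (simp_all add: monochromatic_def)
    with proper show False by simp
  qed
next
  assume none: "monochromatic E c = {}"
  show "\<forall>u v. {u, v} \<in> E \<longrightarrow> c u \<noteq> c v"
  proof (intro allI impI notI)
    fix u v assume uv: "{u, v} \<in> E" "c u = c v"
    then have "{u, v} \<in> monochromatic E c"
      unfolding monochromatic_def by (auto simp: doubleton_eq_iff)
    with none show False by simp
  qed
qed

lemma subset_monochromatic_iff:
  "A \<subseteq> E \<Longrightarrow> A \<subseteq> monochromatic E c \<longleftrightarrow> (\<forall>u v. {u, v} \<in> A \<longrightarrow> c u = c v)"
  unfolding monochromatic_def by blast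

lemma no_monochromatic_indicator:
  assumes "finite E"
  shows "(if monochromatic E c = {} then 1 else 0)
    = (\<Sum>A\<in>Pow E. if A \<subseteq> monochromatic E c then (-1::int) ^ card A else 0)"
proof -
  have fin: "finite (monochromatic E c)" using assms by (simp add: monochromatic_def)
  have P: "Pow (monochromatic E c) = {A \<in> Pow E. A \<subseteq> monochromatic E c}"
    unfolding monochromatic_def by blast
  have "(if monochromatic E c = {} then 1 else 0) = (\<Sum>A\<in>Pow (monochromatic E c). (-1::int) ^ card A)"
    using fin by (simp add: alternating_sum_Pow)
  also have "\<dots> = (\<Sum>A\<in>Pow E. if A \<subseteq> monochromatic E c then (-1::int) ^ card A else 0)"
    unfolding P using assms by (intro sum.inter_filter) simp
  finally show ?thesis .
qed

lemma whitney_expansion: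
  assumes G: "graph_on V E"
  shows "int (chromatic V E lam) = (\<Sum>A\<in>Pow E. (-1) ^ card A * int lam ^ ncomp V A)"
proof -
  let ?C = "V \<rightarrow>\<^sub>E {..<lam}"
  let ?M = "monochromatic E"
  have fE: "finite E" using G by (rule graph_on_finite_edges)
  have fC: "finite ?C" using G unfolding graph_on_def by (simp add: finite_PiE)
  have count: "card {c \<in> ?C. A \<subseteq> ?M c} = lam ^ ncomp V A" if "A \<subseteq> E" for A
  proof -
    have "{c \<in> ?C. A \<subseteq> ?M c} = {c \<in> ?C. \<forall>u v. {u, v} \<in> A \<longrightarrow> c u = c v}"
      using subset_monochromatic_iff[OF that] by simp
    also have "card \<dots> = lam ^ ncomp V A"
      by (rule count_colourings_constant_on_edges[OF graph_on_subset[OF G that]])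
    finally show ?thesis .
  qed
  have "int (chromatic V E lam) = int (card {c \<in> ?C. ?M c = {}})"
    unfolding chromatic_def using proper_iff_no_monochromatic[OF G] by simp
  also have "\<dots> = (\<Sum>c\<in>?C. if ?M c = {} then 1 else 0)"
    using fC by (simp add: sum.inter_filter[symmetric])
  also have "\<dots> = (\<Sum>c\<in>?C. \<Sum>A\<in>Pow E. if A \<subseteq> ?M c then (-1::int) ^ card A else 0)"
    using no_monochromatic_indicator[OF fE] by (intro sum.cong) simp_all
  also have "\<dots> = (\<Sum>A\<in>Pow E. \<Sum>c\<in>?C. if A \<subseteq> ?M c then (-1::int) ^ card A else 0)"
    by (rule sum.swap)
  also have "\<dots> = (\<Sum>A\<in>Pow E. (-1) ^ card A * int lam ^ ncomp V A)"
  proof (rule sum.cong[OF refl])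
    fix A assume "A \<in> Pow E"
    then have "card {c \<in> ?C. A \<subseteq> ?M c} = lam ^ ncomp V A" by (simp add: count)
    then show "(\<Sum>c\<in>?C. if A \<subseteq> ?M c then (-1::int) ^ card A else 0)
      = (-1) ^ card A * int lam ^ ncomp V A"
      using fC by (simp add: sum.If_cases Int_def)
  qed
  finally show ?thesis .
qed

section \<open>The chromatic polynomial as a specialised Tutte sum\<close>

text \<open>The integer identity turning a term of Whitney's expansion into a Tutte weight.\<close>
lemma sign_power_regroup:
  fixes l :: int
  assumes "1 \<le> k" "k \<le> N" "N \<le> k + a"
  shows "(-1) ^ a * l ^ k = (-1) ^ (N - 1) * l * ((-l) ^ ((N - 1) - (N - k)) * (-1) ^ (a - (N - k)))"
proof -
  obtain j where j: "k = Suc j" using assms(1) by (cases k) auto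
  obtain p where p: "N = k + p" using le_Suc_ex[OF assms(2)] by blast
  obtain q where q: "a = p + q" using assms(3) p le_Suc_ex[of p a] by auto
  have e: "(N - 1) - (N - k) = j" "a - (N - k) = q" "N - 1 = j + p"
    using j p q by simp_all
  have "(-1) ^ (N - 1) * l * ((-l) ^ ((N - 1) - (N - k)) * (-1) ^ (a - (N - k)))
      = ((-1) ^ j * (-1) ^ j) * ((-1) ^ p * (-1) ^ q) * (l * l ^ j)"
    unfolding e(1,2) unfolding e(3) power_add power_minus[of l j] by (simp only: mult_ac)
  also have "\<dots> = (-1) ^ a * l ^ k"
    unfolding j q by (simp flip: power_add)
  finally show ?thesis by simp
qed

lemma whitney_term_as_weight:
  assumes G: "graph_on V E" and "V \<noteq> {}" and conn: "ncomp V E = 1" and "A \<subseteq> E"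
  shows "(-1) ^ card A * int lam ^ ncomp V A
    = (-1) ^ (card V - 1) * int lam * weight V E A (1 - int lam) 0"
proof -
  have fV: "finite V" using G unfolding graph_on_def by simp
  have "1 \<le> ncomp V A" "ncomp V A \<le> card V"
    using ncomp_bounds[OF fV \<open>V \<noteq> {}\<close>] by simp_all
  moreover have "card V \<le> ncomp V A + card A"
    by (rule card_le_ncomp_plus_card[OF graph_on_subset[OF G \<open>A \<subseteq> E\<close>]])
  moreover have "weight V E A (1 - int lam) 0
      = (- int lam) ^ ((card V - 1) - (card V - ncomp V A))
        * (-1) ^ (card A - (card V - ncomp V A))"
    unfolding weight_def rk_def nullity_def conn by simp
  ultimately show ?thesis by (simp add: sign_power_regroup)
qed

lemma chromatic_as_weight_sum:
  assumes G: "graph_on V E" and "V \<noteq> {}" and "ncomp V E = 1"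
  shows "int (chromatic V E lam)
    = (-1) ^ (card V - 1) * int lam * (\<Sum>A\<in>Pow E. weight V E A (1 - int lam) 0)"
proof -
  have "int (chromatic V E lam) = (\<Sum>A\<in>Pow E. (-1) ^ card A * int lam ^ ncomp V A)"
    using G by (rule whitney_expansion)
  also have "\<dots> = (\<Sum>A\<in>Pow E. (-1) ^ (card V - 1) * int lam * weight V E A (1 - int lam) 0)"
    using whitney_term_as_weight[OF assms] by (intro sum.cong) simp_all
  also have "\<dots> = (-1) ^ (card V - 1) * int lam * (\<Sum>A\<in>Pow E. weight V E A (1 - int lam) 0)"
    by (simp add: sum_distrib_left)
  finally show ?thesis .
qed

section \<open>Graph symmetries and weighted sums\<close>

definition edge_image :: "('v \<Rightarrow> 'v) \<Rightarrow> 'v set set \<Rightarrow> 'v set set" where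
  "edge_image f A = (\<lambda>e. f ` e) ` A"

lemma edge_image_mono: "A \<subseteq> E \<Longrightarrow> edge_image f A \<subseteq> edge_image f E"
  unfolding edge_image_def by (rule image_mono)

lemma edge_image_comp: "edge_image f (edge_image g A) = edge_image (f \<circ> g) A"
  unfolding edge_image_def by (simp add: image_image image_comp)

lemma conn_edge_image_mono: "(x, y) \<in> conn A \<Longrightarrow> (f x, f y) \<in> conn (edge_image f A)"
  unfolding conn_def
proof (induction rule: rtrancl_induct)
  case (step y z)
  then have "{y, z} \<in> A" by (simp add: adj_def)
  then have "f ` {y, z} \<in> edge_image f A" unfolding edge_image_def by (rule imageI)
  then have "(f y, f z) \<in> adj (edge_image f A)" by (simp add: adj_def)
  with step.IH show ?case by (rule rtrancl_into_rtrancl)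
qed simp

lemma graph_on_edge_image:
  assumes "graph_on V E" "finite W" "f ` V \<subseteq> W"
  shows "graph_on W (edge_image f E)"
  unfolding graph_on_def
proof (intro conjI ballI)
  fix e assume "e \<in> edge_image f E"
  then obtain d where d: "d \<in> E" "e = f ` d" unfolding edge_image_def by blast
  then obtain u v where "d = {u, v}" "u \<in> V" "v \<in> V" using assms(1) unfolding graph_on_def by meson
  then show "\<exists>u v. e = {u, v} \<and> u \<in> W \<and> v \<in> W" using d(2) assms(3) by auto
qed (rule assms(2))

context
  fixes f :: "'v \<Rightarrow> 'v"
  assumes involution: "\<And>x. f (f x) = x"
begin

lemma image_involution [simp]: "f ` f ` e = e"
  by (simp add: image_image involution)

lemma edge_image_involution [simp]: "edge_image f (edge_image f A) = A"
  unfolding edge_image_def by (simp add: image_image involution)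

lemma inj_on_image_involution: "inj_on (\<lambda>e. f ` e) X"
  by (rule inj_onI) (metis image_involution)

lemma adj_edge_image: "(u, v) \<in> adj (edge_image f A) \<longleftrightarrow> (f u, f v) \<in> adj A"
proof
  assume "(u, v) \<in> adj (edge_image f A)"
  then obtain e where e: "e \<in> A" "{u, v} = f ` e"
    unfolding adj_def edge_image_def by auto
  then have "f ` {u, v} = e" by simp
  then have "{f u, f v} = e" by simp
  with e(1) show "(f u, f v) \<in> adj A" by (simp add: adj_def)
next
  assume "(f u, f v) \<in> adj A"
  then have "{f u, f v} \<in> A" by (simp add: adj_def)
  moreover have "{u, v} = f ` {f u, f v}" by (simp add: involution)
  ultimately have "{u, v} \<in> edge_image f A"
    unfolding edge_image_def by (rule rev_image_eqI)
  then show "(u, v) \<in> adj (edge_image f A)" by (simp add: adj_def)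
qed

lemma conn_edge_image_imp: "(u, v) \<in> conn (edge_image f A) \<Longrightarrow> (f u, f v) \<in> conn A"
  unfolding conn_def
proof (induction rule: rtrancl_induct)
  case (step y z)
  then have "(f y, f z) \<in> adj A" by (simp add: adj_edge_image)
  with step.IH show ?case by (rule rtrancl_into_rtrancl)
qed simp

lemma conn_edge_image: "(u, v) \<in> conn (edge_image f A) \<longleftrightarrow> (f u, f v) \<in> conn A"
  using conn_edge_image_imp[of u v A] conn_edge_image_imp[of "f u" "f v" "edge_image f A"]
  by (auto simp: involution)

lemma class_edge_image: "conn (edge_image f A) `` {x} = f ` (conn A `` {f x})"
proof (intro equalityI subsetI)
  fix y assume "y \<in> conn (edge_image f A) `` {x}"
  then have "f y \<in> conn A `` {f x}" by (simp add: conn_edge_image)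
  then show "y \<in> f ` (conn A `` {f x})" by (metis image_eqI involution)
next
  fix y assume "y \<in> f ` (conn A `` {f x})"
  then show "y \<in> conn (edge_image f A) `` {x}" by (auto simp: conn_edge_image involution)
qed

lemma ncomp_edge_image:
  assumes "f ` V = V"
  shows "ncomp V (edge_image f A) = ncomp V A"
proof -
  have "V // conn (edge_image f A) = (\<lambda>x. f ` (conn A `` {f x})) ` V"
    unfolding quotient_conn by (simp add: class_edge_image)
  also have "\<dots> = (\<lambda>e. f ` e) ` ((\<lambda>z. conn A `` {z}) ` (f ` V))"
    by (simp add: image_image)
  also have "\<dots> = (\<lambda>e. f ` e) ` (V // conn A)"
    by (simp only: assms quotient_conn)
  finally show ?thesis
    unfolding ncomp_def by (simp add: card_image[OF inj_on_image_involution])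
qed

lemma weight_edge_image:
  assumes "f ` V = V"
  shows "weight V E (edge_image f A) x y = weight V E A x y"
proof -
  have "card (edge_image f A) = card A"
    unfolding edge_image_def by (rule card_image[OF inj_on_image_involution])
  then show ?thesis
    unfolding weight_def rk_def nullity_def by (simp add: ncomp_edge_image[OF assms])
qed

lemma weight_sum_symmetry:
  assumes V: "f ` V = V" and E: "edge_image f E = E"
  shows "(\<Sum>A\<in>{A. A \<subseteq> E \<and> P A}. weight V E A x y)
       = (\<Sum>A\<in>{A. A \<subseteq> E \<and> P (edge_image f A)}. weight V E A x y)"
proof (rule sum.reindex_bij_witness[where i = "edge_image f" and j = "edge_image f"])
  fix A assume A: "A \<in> {A. A \<subseteq> E \<and> P A}"
  show "edge_image f (edge_image f A) = A" by simp
  show "edge_image f A \<in> {A. A \<subseteq> E \<and> P (edge_image f A)}"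
    using A edge_image_mono[of A E f] E by simp
  show "weight V E (edge_image f A) x y = weight V E A x y"
    by (rule weight_edge_image[OF V])
next
  fix A assume A: "A \<in> {A. A \<subseteq> E \<and> P (edge_image f A)}"
  show "edge_image f (edge_image f A) = A" by simp
  show "edge_image f A \<in> {A. A \<subseteq> E \<and> P A}"
    using A edge_image_mono[of A E f] E by simp
qed

end

text \<open>Every spanning subgraph realises exactly one of five connectivity patterns of
  three terminals t, l, r, so g A is the sum of its five restrictions.\<close>
lemma three_terminal_patterns:
  fixes g :: "'v set set \<Rightarrow> 'a::comm_monoid_add"
  shows "g A =
      (if (t, l) \<in> conn A \<and> (t, r) \<in> conn A then g A else 0)
    + (if (t, l) \<in> conn A \<and> (t, r) \<notin> conn A then g A else 0)
    + (if (t, l) \<notin> conn A \<and> (t, r) \<in> conn A then g A else 0)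
    + (if (l, r) \<in> conn A \<and> (t, l) \<notin> conn A then g A else 0)
    + (if (t, l) \<notin> conn A \<and> (t, r) \<notin> conn A \<and> (l, r) \<notin> conn A then g A else 0)"
proof -
  have tl: "(t, l) \<in> conn A" if "(t, r) \<in> conn A" "(l, r) \<in> conn A"
    using conn_trans[OF that(1) conn_sym[OF that(2)]] .
  have tr: "(t, r) \<in> conn A" if "(t, l) \<in> conn A" "(l, r) \<in> conn A"
    using conn_trans[OF that] .
  consider
      "(t, l) \<in> conn A" "(t, r) \<in> conn A"
    | "(t, l) \<in> conn A" "(t, r) \<notin> conn A"
    | "(t, l) \<notin> conn A" "(t, r) \<in> conn A"
    | "(t, l) \<notin> conn A" "(t, r) \<notin> conn A" "(l, r) \<in> conn A"
    | "(t, l) \<notin> conn A" "(t, r) \<notin> conn A" "(l, r) \<notin> conn A"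
    by blast
  then show ?thesis
  proof cases
    case 1 then show ?thesis by simp
  next
    case 2
    then have "(l, r) \<notin> conn A" using tr by blast
    with 2 show ?thesis by simp
  next
    case 3
    then have "(l, r) \<notin> conn A" using tl by blast
    with 3 show ?thesis by simp
  next
    case 4 then show ?thesis by simp
  next
    case 5 then show ?thesis by simp
  qed
qed

lemma sum_Pow_split_three_terminals:
  fixes g :: "'v set set \<Rightarrow> 'a::comm_monoid_add"
  assumes "finite E"
  shows "(\<Sum>A\<in>Pow E. g A) =
      (\<Sum>A\<in>{A. A \<subseteq> E \<and> (t, l) \<in> conn A \<and> (t, r) \<in> conn A}. g A)
    + (\<Sum>A\<in>{A. A \<subseteq> E \<and> (t, l) \<in> conn A \<and> (t, r) \<notin> conn A}. g A)
    + (\<Sum>A\<in>{A. A \<subseteq> E \<and> (t, l) \<notin> conn A \<and> (t, r) \<in> conn A}. g A)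
    + (\<Sum>A\<in>{A. A \<subseteq> E \<and> (l, r) \<in> conn A \<and> (t, l) \<notin> conn A}. g A)
    + (\<Sum>A\<in>{A. A \<subseteq> E \<and> (t, l) \<notin> conn A \<and> (t, r) \<notin> conn A \<and> (l, r) \<notin> conn A}. g A)"
  (is "_ = ?S1 + ?S2 + ?S3 + ?S4 + ?S5")
proof -
  have restrict: "(\<Sum>A\<in>{A. A \<subseteq> E \<and> P A}. g A) = (\<Sum>A\<in>Pow E. if P A then g A else 0)" for P
  proof -
    have "{A. A \<subseteq> E \<and> P A} = {A \<in> Pow E. P A}" by auto
    then show ?thesis using assms by (simp only:) (rule sum.inter_filter, simp)
  qed
  have "(\<Sum>A\<in>Pow E. g A) = (\<Sum>A\<in>Pow E.
      (if (t, l) \<in> conn A \<and> (t, r) \<in> conn A then g A else 0)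
    + (if (t, l) \<in> conn A \<and> (t, r) \<notin> conn A then g A else 0)
    + (if (t, l) \<notin> conn A \<and> (t, r) \<in> conn A then g A else 0)
    + (if (l, r) \<in> conn A \<and> (t, l) \<notin> conn A then g A else 0)
    + (if (t, l) \<notin> conn A \<and> (t, r) \<notin> conn A \<and> (l, r) \<notin> conn A then g A else 0))"
    using three_terminal_patterns by (rule sum.cong[OF refl])
  also have "\<dots> = ?S1 + ?S2 + ?S3 + ?S4 + ?S5"
    unfolding restrict by (simp only: sum.distrib)
  finally show ?thesis .
qed

section \<open>The graphs Sigma_n\<close>

lemma sig_corners:
  "sig_top n = replicate n 0" "sig_left n = replicate n 1" "sig_right n = replicate n 2"
  by (induction n rule: sig_top.induct) simp_all

lemma sigV_words: "sigV (Suc m) = {w. set w \<subseteq> {0, 1, 2} \<and> length w = Suc m}"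
proof (induction m)
  case 0
  show ?case by (auto simp: length_Suc_conv)
next
  case (Suc m)
  show ?case by (simp only: sigV.simps Suc.IH) (auto simp: length_Suc_conv)
qed

lemma finite_sigV: "finite (sigV (Suc m))"
  unfolding sigV_words by (rule finite_lists_length_eq) simp

lemma card_sigV: "card (sigV (Suc m)) = 3 ^ Suc m"
proof -
  have "finite {0, 1, 2 :: nat}" "card {0, 1, 2 :: nat} = 3" by simp_all
  then show ?thesis unfolding sigV_words by (simp only: card_lists_length_eq)
qed

lemma sig_top_in_sigV: "sig_top (Suc m) \<in> sigV (Suc m)"
  unfolding sigV_words sig_corners by auto

definition letter_pairs :: "(nat \<times> nat) set" where
  "letter_pairs = {(i, j). i \<in> {0, 1, 2} \<and> j \<in> {0, 1, 2} \<and> i \<noteq> j}"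

text \<open>The edges {i j^k, j i^k} for distinct letters i, j: for k = 0 these form the
  triangle Sigma_1, for k > 0 the three edges joining the copies in Sigma_(k+1).\<close>
definition pair_edges :: "nat \<Rightarrow> nat list set set" where
  "pair_edges k = (\<lambda>(i, j). {i # replicate k j, j # replicate k i}) ` letter_pairs"

lemma pair_edges_explicit:
  "pair_edges k = {{0 # replicate k 1, 1 # replicate k 0}, {0 # replicate k 2, 2 # replicate k 0},
     {1 # replicate k 2, 2 # replicate k 1}}"
proof -
  have pairs: "letter_pairs = {(0, 1), (1, 0), (0, 2), (2, 0), (1, 2), (2, 1)}"
    unfolding letter_pairs_def by auto
  show ?thesis unfolding pair_edges_def pairs by (simp add: insert_commute)
qed

lemma sigE_base: "sigE (Suc 0) = pair_edges 0"
  unfolding pair_edges_explicit by (simp add: insert_commute)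

lemma sigE_Suc_Suc:
  "sigE (Suc (Suc m)) = (\<Union>i\<in>{0, 1, 2}. edge_image (Cons i) (sigE (Suc m))) \<union> pair_edges (Suc m)"
  unfolding pair_edges_explicit edge_image_def by (simp add: sig_corners)

lemma Cons_letter_in_sigV: "i \<in> {0, 1, 2} \<Longrightarrow> w \<in> sigV (Suc m) \<Longrightarrow> i # w \<in> sigV (Suc (Suc m))"
  unfolding sigV_words by simp

lemma letter_replicate_in_sigV:
  "i \<in> {0, 1, 2} \<Longrightarrow> j \<in> {0, 1, 2} \<Longrightarrow> i # replicate k j \<in> sigV (Suc k)"
  unfolding sigV_words by (auto simp: set_replicate_conv_if)

lemma graph_on_pair_edges: "graph_on (sigV (Suc k)) (pair_edges k)"
  unfolding graph_on_def
proof (intro conjI ballI)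
  fix e assume "e \<in> pair_edges k"
  then obtain i j where ij: "i \<in> {0, 1, 2}" "j \<in> {0, 1, 2}"
    and e: "e = {i # replicate k j, j # replicate k i}"
    unfolding pair_edges_def letter_pairs_def by auto
  show "\<exists>u v. e = {u, v} \<and> u \<in> sigV (Suc k) \<and> v \<in> sigV (Suc k)"
    using e letter_replicate_in_sigV[OF ij] letter_replicate_in_sigV[OF ij(2,1)] by blast
qed (rule finite_sigV)

lemma graph_on_sigE: "graph_on (sigV (Suc m)) (sigE (Suc m))"
proof (induction m)
  case 0
  show ?case unfolding sigE_base by (rule graph_on_pair_edges)
next
  case (Suc m)
  have "graph_on (sigV (Suc (Suc m))) (edge_image (Cons i) (sigE (Suc m)))" if "i \<in> {0, 1, 2}" for i
    by (rule graph_on_edge_image[OF Suc.IH finite_sigV]) (use Cons_letter_in_sigV[OF that] in blast)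
  then show ?case unfolding sigE_Suc_Suc
    by (intro graph_on_Un graph_on_UN finite_sigV graph_on_pair_edges)
qed

text \<open>Sigma_n is connected: its top vertex reaches every vertex, passing through the
  connecting edges between the copies.\<close>
lemma sig_connected:
  assumes "x \<in> sigV (Suc m)"
  shows "(sig_top (Suc m), x) \<in> conn (sigE (Suc m))"
  using assms
proof (induction m arbitrary: x)
  case 0
  have "([0], [1]) \<in> conn (sigE (Suc 0))" "([0], [2]) \<in> conn (sigE (Suc 0))"
    by (simp_all add: conn_edge)
  with 0 show ?case by auto
next
  case (Suc m)
  let ?E = "sigE (Suc (Suc m))" and ?T = "replicate (Suc m) 0"
  have copy: "(i # a, i # b) \<in> conn ?E" if "i \<in> {0, 1, 2}" "(a, b) \<in> conn (sigE (Suc m))" for i a b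
  proof (rule conn_mono)
    show "edge_image (Cons i) (sigE (Suc m)) \<subseteq> ?E" using that(1) unfolding sigE_Suc_Suc by blast
    show "(i # a, i # b) \<in> conn (edge_image (Cons i) (sigE (Suc m)))"
      using conn_edge_image_mono[OF that(2)] .
  qed
  have reach_corner: "(0 # ?T, 0 # replicate (Suc m) j) \<in> conn ?E" if "j \<in> {0, 1, 2}" for j
    using copy Suc.IH letter_replicate_in_sigV[OF that that] by (simp add: sig_corners)
  have bridge: "(0 # replicate (Suc m) j, j # ?T) \<in> conn ?E" if "j \<in> {1, 2}" for j
  proof (rule conn_edge)
    have "{0 # replicate (Suc m) j, j # ?T} \<in> pair_edges (Suc m)"
      using that unfolding pair_edges_explicit by auto
    then show "{0 # replicate (Suc m) j, j # ?T} \<in> ?E" unfolding sigE_Suc_Suc by (rule UnI2)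
  qed
  have top_copy: "(0 # ?T, i # ?T) \<in> conn ?E" if "i \<in> {0, 1, 2}" for i
  proof (cases "i = 0")
    case False
    then have "i \<in> {1, 2}" using that by simp
    then show ?thesis using conn_trans[OF reach_corner bridge] that by simp
  qed simp
  obtain i w where iw: "i \<in> {0, 1, 2}" "w \<in> sigV (Suc m)" "x = i # w"
    using Suc.prems by auto
  have "(i # ?T, x) \<in> conn ?E" using copy[OF iw(1) Suc.IH[OF iw(2)]] iw(3) by (simp add: sig_corners)
  with top_copy[OF iw(1)] show ?case by (simp add: sig_corners conn_trans)
qed

lemma ncomp_sig: "ncomp (sigV (Suc m)) (sigE (Suc m)) = 1"
  using sig_top_in_sigV sig_connected by (rule ncomp_eq_1)

context
  fixes s :: "nat \<Rightarrow> nat"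
  assumes letter_involution: "\<And>k. s (s k) = k"
    and letters_closed: "s ` {0, 1, 2} \<subseteq> {0, 1, 2}"
begin

lemma letter_closed: "i \<in> {0, 1, 2} \<Longrightarrow> s i \<in> {0, 1, 2}"
  using letters_closed by (rule subsetD[OF _ imageI])

lemma letters_permuted: "s ` {0, 1, 2} = {0, 1, 2}"
proof
  show "{0, 1, 2} \<subseteq> s ` {0, 1, 2}"
  proof
    fix x :: nat assume "x \<in> {0, 1, 2}"
    then have "s x \<in> {0, 1, 2}" by (rule letter_closed)
    moreover have "x = s (s x)" by (simp add: letter_involution)
    ultimately show "x \<in> s ` {0, 1, 2}" by (rule rev_image_eqI)
  qed
qed (rule letters_closed)

lemma letter_pairs_symmetry: "(\<lambda>(i, j). (s i, s j)) ` letter_pairs = letter_pairs"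
proof -
  have mapped: "(s i, s j) \<in> letter_pairs" if "(i, j) \<in> letter_pairs" for i j
  proof -
    from that have "i \<in> {0, 1, 2}" "j \<in> {0, 1, 2}" "i \<noteq> j"
      by (simp_all add: letter_pairs_def)
    moreover have "s i \<noteq> s j"
    proof
      assume "s i = s j"
      then have "s (s i) = s (s j)" by simp
      with \<open>i \<noteq> j\<close> show False by (simp add: letter_involution)
    qed
    moreover have "s i \<in> {0, 1, 2}" "s j \<in> {0, 1, 2}"
      using \<open>i \<in> {0, 1, 2}\<close> \<open>j \<in> {0, 1, 2}\<close> by (simp_all only: letter_closed)
    ultimately show ?thesis unfolding letter_pairs_def by blast
  qed
  have "p \<in> (\<lambda>(i, j). (s i, s j)) ` letter_pairs" if "p \<in> letter_pairs" for p
  proof -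
    obtain i j where ij: "p = (i, j)" by (cases p)
    have "(s i, s j) \<in> letter_pairs" using mapped that ij by simp
    moreover have "p = (\<lambda>(i, j). (s i, s j)) (s i, s j)" using ij letter_involution by simp
    ultimately show ?thesis by (rule rev_image_eqI)
  qed
  then show ?thesis using mapped by auto
qed

lemma pair_edges_symmetry: "edge_image (map s) (pair_edges k) = pair_edges k"
proof -
  let ?F = "\<lambda>(i, j). {i # replicate k j, j # replicate k (i :: nat)}"
  have "edge_image (map s) (pair_edges k) = (\<lambda>p. ?F ((\<lambda>(i, j). (s i, s j)) p)) ` letter_pairs"
    unfolding edge_image_def pair_edges_def image_image
    by (intro image_cong refl) (auto split: prod.splits simp: map_replicate)
  also have "\<dots> = ?F ` ((\<lambda>(i, j). (s i, s j)) ` letter_pairs)"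
    by (simp only: image_image)
  finally show ?thesis unfolding letter_pairs_symmetry pair_edges_def .
qed

lemma sigV_symmetry: "map s ` sigV (Suc m) = sigV (Suc m)"
proof -
  have into: "map s w \<in> sigV (Suc m)" if "w \<in> sigV (Suc m)" for w
  proof -
    have w: "set w \<subseteq> {0, 1, 2}" "length w = Suc m" using that unfolding sigV_words by simp_all
    have "s ` set w \<subseteq> {0, 1, 2}" by (rule order_trans[OF image_mono[OF w(1)] letters_closed])
    then have "set (map s w) \<subseteq> {0, 1, 2}" by (simp only: set_map)
    then show ?thesis using w(2) unfolding sigV_words by simp
  qed
  have "w \<in> map s ` sigV (Suc m)" if "w \<in> sigV (Suc m)" for w
  proof
    show "w = map s (map s w)" by (simp add: letter_involution map_idI)
  qed (rule into[OF that])
  with into show ?thesis by blast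
qed

lemma sigE_symmetry: "edge_image (map s) (sigE (Suc m)) = sigE (Suc m)"
proof (induction m)
  case 0
  show ?case unfolding sigE_base by (rule pair_edges_symmetry)
next
  case (Suc m)
  have copy: "edge_image (map s) (edge_image (Cons i) E) = edge_image (Cons (s i)) (edge_image (map s) E)"
    for i and E :: "nat list set set"
    by (simp add: edge_image_comp comp_def)
  have "edge_image (map s) (sigE (Suc (Suc m)))
      = (\<Union>i\<in>{0, 1, 2}. edge_image (Cons (s i)) (sigE (Suc m))) \<union> pair_edges (Suc m)"
    unfolding sigE_Suc_Suc edge_image_def image_Un image_UN
    by (simp only: edge_image_def[symmetric] copy Suc.IH pair_edges_symmetry)
  also have "\<dots> = (\<Union>i\<in>s ` {0, 1, 2}. edge_image (Cons i) (sigE (Suc m))) \<union> pair_edges (Suc m)"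
    by (simp only: image_image)
  finally show ?case unfolding letters_permuted sigE_Suc_Suc .
qed

end

lemma weight_sum_letter_symmetry:
  assumes "\<And>k. s (s k) = k" "s ` {0, 1, 2} \<subseteq> {0, 1, 2}"
  shows "(\<Sum>A\<in>{A. A \<subseteq> sigE (Suc m) \<and> P A}. weight (sigV (Suc m)) (sigE (Suc m)) A x y)
       = (\<Sum>A\<in>{A. A \<subseteq> sigE (Suc m) \<and> P (edge_image (map s) A)}.
            weight (sigV (Suc m)) (sigE (Suc m)) A x y)"
proof (rule weight_sum_symmetry)
  show "map s (map s w) = w" for w by (simp add: assms(1) map_idI)
  show "map s ` sigV (Suc m) = sigV (Suc m)" using assms by (rule sigV_symmetry)
  show "edge_image (map s) (sigE (Suc m)) = sigE (Suc m)" using assms by (rule sigE_symmetry)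
qed

text \<open>Exchanging letters 0 and 2 swaps top and right and fixes left: subgraphs in
  which only top and left are connected contribute H_1.\<close>
lemma H1_by_symmetry_top_left:
  "(\<Sum>A\<in>{A. A \<subseteq> sigE (Suc m) \<and> (sig_top (Suc m), sig_left (Suc m)) \<in> conn A
      \<and> (sig_top (Suc m), sig_right (Suc m)) \<notin> conn A}. weight (sigV (Suc m)) (sigE (Suc m)) A x y)
   = H1 (Suc m) x y"
proof -
  let ?t = "sig_top (Suc m)" and ?l = "sig_left (Suc m)" and ?r = "sig_right (Suc m)"
  let ?f = "map (transpose 0 2)"
  have conn_f: "(u, v) \<in> conn (edge_image ?f A) \<longleftrightarrow> (?f u, ?f v) \<in> conn A" for u v A
    by (rule conn_edge_image) (simp add: map_idI)
  have corners: "?f ?t = ?r" "?f ?l = ?l" "?f ?r = ?t"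
    by (simp_all add: sig_corners map_replicate)
  have "H1 (Suc m) x y = (\<Sum>A\<in>{A. A \<subseteq> sigE (Suc m) \<and> (?l, ?r) \<in> conn (edge_image ?f A)
      \<and> (?t, ?l) \<notin> conn (edge_image ?f A)}. weight (sigV (Suc m)) (sigE (Suc m)) A x y)"
    unfolding H1_def by (rule weight_sum_letter_symmetry) auto
  also have "{A. A \<subseteq> sigE (Suc m) \<and> (?l, ?r) \<in> conn (edge_image ?f A) \<and> (?t, ?l) \<notin> conn (edge_image ?f A)}
      = {A. A \<subseteq> sigE (Suc m) \<and> (?t, ?l) \<in> conn A \<and> (?t, ?r) \<notin> conn A}"
  proof (rule Collect_cong)
    fix A
    have "(?l, ?r) \<in> conn (edge_image ?f A) \<and> (?t, ?l) \<notin> conn (edge_image ?f A)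
      \<longleftrightarrow> (?t, ?l) \<in> conn A \<and> (?l, ?r) \<notin> conn A"
      unfolding conn_f corners conn_commute[of ?l ?t] conn_commute[of ?r ?l] ..
    also have "\<dots> \<longleftrightarrow> (?t, ?l) \<in> conn A \<and> (?t, ?r) \<notin> conn A"
      using conn_same_class[of ?t ?l A ?r] by blast
    finally show "(A \<subseteq> sigE (Suc m) \<and> (?l, ?r) \<in> conn (edge_image ?f A) \<and> (?t, ?l) \<notin> conn (edge_image ?f A))
      \<longleftrightarrow> (A \<subseteq> sigE (Suc m) \<and> (?t, ?l) \<in> conn A \<and> (?t, ?r) \<notin> conn A)" by simp
  qed
  finally show ?thesis by simp
qed

text \<open>Exchanging letters 0 and 1 swaps top and left and fixes right: subgraphs in
  which only top and right are connected contribute H_1 as well.\<close>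
lemma H1_by_symmetry_top_right:
  "(\<Sum>A\<in>{A. A \<subseteq> sigE (Suc m) \<and> (sig_top (Suc m), sig_left (Suc m)) \<notin> conn A
      \<and> (sig_top (Suc m), sig_right (Suc m)) \<in> conn A}. weight (sigV (Suc m)) (sigE (Suc m)) A x y)
   = H1 (Suc m) x y"
proof -
  let ?t = "sig_top (Suc m)" and ?l = "sig_left (Suc m)" and ?r = "sig_right (Suc m)"
  let ?f = "map (transpose 0 1)"
  have conn_f: "(u, v) \<in> conn (edge_image ?f A) \<longleftrightarrow> (?f u, ?f v) \<in> conn A" for u v A
    by (rule conn_edge_image) (simp add: map_idI)
  have corners: "?f ?t = ?l" "?f ?l = ?t" "?f ?r = ?r"
    by (simp_all add: sig_corners map_replicate)
  have "H1 (Suc m) x y = (\<Sum>A\<in>{A. A \<subseteq> sigE (Suc m) \<and> (?l, ?r) \<in> conn (edge_image ?f A)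
      \<and> (?t, ?l) \<notin> conn (edge_image ?f A)}. weight (sigV (Suc m)) (sigE (Suc m)) A x y)"
    unfolding H1_def by (rule weight_sum_letter_symmetry) auto
  also have "{A. A \<subseteq> sigE (Suc m) \<and> (?l, ?r) \<in> conn (edge_image ?f A) \<and> (?t, ?l) \<notin> conn (edge_image ?f A)}
      = {A. A \<subseteq> sigE (Suc m) \<and> (?t, ?l) \<notin> conn A \<and> (?t, ?r) \<in> conn A}"
  proof (rule Collect_cong)
    fix A
    show "(A \<subseteq> sigE (Suc m) \<and> (?l, ?r) \<in> conn (edge_image ?f A) \<and> (?t, ?l) \<notin> conn (edge_image ?f A))
      \<longleftrightarrow> (A \<subseteq> sigE (Suc m) \<and> (?t, ?l) \<notin> conn A \<and> (?t, ?r) \<in> conn A)"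
      unfolding conn_f corners conn_commute[of ?l ?t] by blast
  qed
  finally show ?thesis by simp
qed

lemma sig_weight_sum_decomposition:
  "(\<Sum>A\<in>Pow (sigE (Suc m)). weight (sigV (Suc m)) (sigE (Suc m)) A x y)
     = H2 (Suc m) x y + 3 * H1 (Suc m) x y + H0 (Suc m) x y"
proof -
  have fin: "finite (sigE (Suc m))" using graph_on_sigE by (rule graph_on_finite_edges)
  show ?thesis
    unfolding sum_Pow_split_three_terminals[where t = "sig_top (Suc m)" and l = "sig_left (Suc m)"
        and r = "sig_right (Suc m)", OF fin]
      H1_by_symmetry_top_left H1_by_symmetry_top_right H2_def[symmetric] H1_def[symmetric] H0_def[symmetric]
    by (simp add: algebra_simps)
qed

theorem proposition4p12:
  fixes n lam :: nat
  assumes "n \<ge> 1"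
  shows "int (chromatic (sigV n) (sigE n) lam) = (-1) ^ (3 ^ n - 1) * int lam * Pn n (int lam)"
proof -
  obtain m where n: "n = Suc m" using assms by (cases n) auto
  have "sigV (Suc m) \<noteq> {}" using sig_top_in_sigV by blast
  then have "int (chromatic (sigV n) (sigE n) lam)
      = (-1) ^ (card (sigV n) - 1) * int lam
        * (\<Sum>A\<in>Pow (sigE n). weight (sigV n) (sigE n) A (1 - int lam) 0)"
    unfolding n using graph_on_sigE ncomp_sig by (intro chromatic_as_weight_sum)
  also have "(\<Sum>A\<in>Pow (sigE n). weight (sigV n) (sigE n) A (1 - int lam) 0) = Pn n (int lam)"
    unfolding n sig_weight_sum_decomposition Pn_def P2_def P1_def P0_def ..
  finally show ?thesis unfolding n card_sigV .
qed
end
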